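(* Let $\mathcal{U}\subset\Delta(\mathcal{X}\times\mathcal{Y})$ be a convex and compact uncertainty set, let $\mathrm{h}^{\mathcal{U}}\in \mathrm{T}(\mathcal{X},\mathcal{Y})$ be an $\ell$-MRC for $\mathcal{U}$, and let $\mathrm{p}^{\mathcal{U}}\in\mathcal{U}$ be a probability distribution with maximum $\ell$-entropy over $\mathcal{U}$. Then $$H_\ell(\mathcal{U})=\ell(\mathrm{h}^{\mathcal{U}},\mathrm{p}^{\mathcal{U}})=\min_{\mathrm{h}\in \mathrm{T}(\mathcal{X},\mathcal{Y})}\max_{\mathrm{p}\in\mathcal{U}}\ell(\mathrm{h},\mathrm{p});$$ that is, $\mathrm{h}^{\mathcal{U}}$ minimizes the expected $\ell$-loss with respect to $\mathrm{p}^{\mathcal{U}}$, $\mathrm{p}^{\mathcal{U}}$ maximizes the expected $\ell$-loss of $\mathrm{h}^{\mathcal{U}}$ over distributions in $\mathcal{U}$, and this expected $\ell$-loss coincides with the maximum $\ell$-entropy over $\mathcal{U}$.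
   Context: Let $\mathcal{X}$ and $\mathcal{Y}$ be finite nonempty sets, with $\mathcal{Y}=\{1,\dots,|\mathcal{Y}|\}$. For a finite set $\mathcal{Z}$, $\Delta(\mathcal{Z})$ denotes the set of probability distributions on $\mathcal{Z}$. A classification rule is a map $\mathrm{h}$ assigning to each $x\in\mathcal{X}$ a distribution $\mathrm{h}(\cdot|x)\in\Delta(\mathcal{Y})$; $\mathrm{T}(\mathcal{X},\mathcal{Y})$ is the set of all classification rules. A score function $L:\Delta(\mathcal{Y})\times\mathcal{Y}\to(-\infty,\infty]$ is lower semi-continuous and convex in its first argument; the associated classification loss is $\ell(\mathrm{h},(x,y))=L(\mathrm{h}(\cdot|x),y)$, and for $\mathrm{p}\in\Delta(\mathcal{X}\times\mathcal{Y})$ the expected loss is $\ell(\mathrm{h},\mathrm{p})=\sum_{x\in\mathcal{X},y\in\mathcal{Y}}\mathrm{p}(x,y)\ell(\mathrm{h},(x,y))$. The $\ell$-entropy of $\mathrm{p}$ is $H_\ell(\mathrm{p})=\min_{\mathrm{h}\in\mathrm{T}(\mathcal{X},\mathcal{Y})}\ell(\mathrm{h},\mathrm{p})$, and for a compact $\mathcal{U}\subset\Delta(\mathcal{X}\times\mathcal{Y})$, $H_\ell(\mathcal{U})=\max_{\mathrm{p}\in\mathcal{U}}H_\ell(\mathrm{p})$. For a convex compact $\mathcal{U}$, a rule $\mathrm{h}^{\mathcal{U}}$ is an $\ell$-MRC (minimax risk classifier) for $\mathcal{U}$ if $\mathrm{h}^{\mathcal{U}}\in\arg\min_{\mathrm{h}\in\mathrm{T}(\mathcal{X},\mathcal{Y})}\max_{\mathrm{p}\in\mathcal{U}}\ell(\mathrm{h},\mathrm{p})$.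 *)

theory Defs
  imports "HOL-Analysis.Analysis"
begin

definition Delta :: "(real ^ 'z::finite) set" where
  "Delta = {q. (\<forall>z. 0 \<le> q $ z) \<and> (\<Sum>z\<in>UNIV. q $ z) = 1}"

definition rules :: "('x::finite \<Rightarrow> real ^ 'y::finite) set" where
  "rules = {h. \<forall>x. h x \<in> Delta}"

definition score_function :: "(real ^ 'y::finite \<Rightarrow> 'y \<Rightarrow> ereal) \<Rightarrow> bool" where
  "score_function L \<longleftrightarrow>
     (\<forall>q\<in>Delta. \<forall>y. L q y \<noteq> -\<infinity>) \<and>
     (\<forall>y. \<forall>q\<in>Delta. L q y \<le> Liminf (at q within Delta) (\<lambda>r. L r y)) \<and>
     (\<forall>y. \<forall>q1\<in>Delta. \<forall>q2\<in>Delta. \<forall>t::real. 0 \<le> t \<and> t \<le> 1 \<longrightarrow>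
        L ((1 - t) *\<^sub>R q1 + t *\<^sub>R q2) y \<le> ereal (1 - t) * L q1 y + ereal t * L q2 y)"

definition exp_loss ::
  "(real ^ 'y::finite \<Rightarrow> 'y \<Rightarrow> ereal) \<Rightarrow> ('x::finite \<Rightarrow> real ^ 'y) \<Rightarrow> real ^ ('x \<times> 'y) \<Rightarrow> ereal" where
  "exp_loss L h p = (\<Sum>(x,y)\<in>UNIV. ereal (p $ (x,y)) * L (h x) y)"

definition entropy ::
  "(real ^ 'y::finite \<Rightarrow> 'y \<Rightarrow> ereal) \<Rightarrow> real ^ ('x::finite \<times> 'y) \<Rightarrow> ereal" where
  "entropy L p = (INF h\<in>(rules :: ('x \<Rightarrow> real ^ 'y) set). exp_loss L h p)"

definition entropy_set ::
  "(real ^ 'y::finite \<Rightarrow> 'y \<Rightarrow> ereal) \<Rightarrow> (real ^ ('x::finite \<times> 'y)) set \<Rightarrow> ereal" where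
  "entropy_set L U = (SUP p\<in>U. entropy L p)"

definition is_MRC ::
  "(real ^ 'y::finite \<Rightarrow> 'y \<Rightarrow> ereal) \<Rightarrow> (real ^ ('x::finite \<times> 'y)) set \<Rightarrow> ('x \<Rightarrow> real ^ 'y) \<Rightarrow> bool" where
  "is_MRC L U h \<longleftrightarrow> h \<in> rules \<and>
     (\<forall>h'\<in>rules. (SUP p\<in>U. exp_loss L h p) \<le> (SUP p\<in>U. exp_loss L h' p))"

end

theory Submission
  imports Defs
begin

text \<open>The inequalities \<open>H(U) \<le> l(hU, pU) \<le> max_{p \<in> U} l(hU, p)\<close> are immediate; the content is
  the minimax inequality \<open>min_h max_{p \<in> U} l(h, p) \<le> H(U)\<close>. If every rule had worst-case loss
  above \<open>c > H(U)\<close>, the convex set of vectors dominating the losses of some rule would miss the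
  convex set of vectors whose expectation under every \<open>p \<in> U\<close> is at most \<open>c\<close>. A separating
  hyperplane, normalized, is then a distribution \<open>q \<in> U\<close> under which every rule has expected
  loss at least \<open>c\<close>, contradicting \<open>H(q) \<le> H(U) < c\<close>. Because losses may be infinite off the
  support of \<open>q\<close>, the argument is run with \<open>q\<close> slightly mixed with a point of \<open>U\<close> of maximal
  support, using that \<open>L\<close> is bounded below by lower semicontinuity.\<close>

lemma Delta_nonneg: "q \<in> Delta \<Longrightarrow> 0 \<le> q $ z"
  by (simp add: Delta_def)

lemma Delta_sum: "q \<in> Delta \<Longrightarrow> (\<Sum>z\<in>UNIV. q $ z) = 1"
  by (simp add: Delta_def)

lemma Delta_le_one: "q \<in> Delta \<Longrightarrow> q $ z \<le> 1"
  using member_le_sum[of z UNIV "\<lambda>z. q $ z"] by (simp add: Delta_def)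

lemma inner_Delta_one: "q \<in> Delta \<Longrightarrow> inner q 1 = 1"
  by (simp add: inner_vec_def Delta_sum)

lemma inner_Delta_ge:
  assumes "q \<in> Delta" and "\<And>z. B \<le> v $ z"
  shows "B \<le> inner q v"
proof -
  have "B = (\<Sum>z\<in>UNIV. q $ z * B)"
    using assms(1) by (simp add: Delta_sum flip: sum_distrib_right)
  also have "\<dots> \<le> (\<Sum>z\<in>UNIV. q $ z * v $ z)"
    using assms by (intro sum_mono mult_left_mono) (auto simp: Delta_nonneg)
  finally show ?thesis by (simp add: inner_vec_def)
qed

lemma convex_Delta: "convex Delta"
  by (auto simp: convex_def Delta_def sum.distrib simp flip: sum_distrib_left)

lemma compact_Delta: "compact (Delta :: (real ^ 'z::finite) set)"
proof -
  have "Delta = (\<Inter>z. {q::real^'z. 0 \<le> q $ z}) \<inter> {q. (\<Sum>z\<in>UNIV. q $ z) = 1}"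
    by (auto simp: Delta_def)
  moreover have "closed \<dots>"
    by (intro closed_Int closed_INT ballI closed_Collect_le closed_Collect_eq continuous_intros)
  moreover have "Delta \<subseteq> cbox 0 (1 :: real^'z)"
    by (auto simp: mem_box_cart Delta_nonneg Delta_le_one)
  ultimately show ?thesis
    by (metis bounded_cbox bounded_subset compact_eq_bounded_closed)
qed

lemma rules_convex_comb:
  assumes "h1 \<in> rules" and "h2 \<in> rules" and "0 \<le> t" and "t \<le> 1"
  shows "(\<lambda>x. (1 - t) *\<^sub>R h1 x + t *\<^sub>R h2 x) \<in> rules"
  using assms convex_Delta unfolding rules_def convex_alt by blast

lemma exists_mem_pos_on_support:
  fixes U :: "(real ^ 'n::finite) set"
  assumes "U \<subseteq> Delta" and "convex U" and "U \<noteq> {}"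
  obtains p where "p \<in> U" and "\<And>i p'. p' \<in> U \<Longrightarrow> 0 < p' $ i \<Longrightarrow> 0 < p $ i"
proof -
  have "\<exists>p\<in>U. (\<exists>p'\<in>U. 0 < p' $ i) \<longrightarrow> 0 < p $ i" for i
    using \<open>U \<noteq> {}\<close> by blast
  then obtain P where P: "\<And>i. P i \<in> U" "\<And>i p'. p' \<in> U \<Longrightarrow> 0 < p' $ i \<Longrightarrow> 0 < P i $ i"
    by metis
  define N where "N = real CARD('n)"
  have "N > 0" by (simp add: N_def)
  define p where "p = (\<Sum>i\<in>UNIV. (1 / N) *\<^sub>R P i)"
  have "p \<in> U"
    unfolding p_def using \<open>convex U\<close> P(1) \<open>N > 0\<close> by (intro convex_sum) (auto simp: N_def)
  moreover have "0 < p $ i" if "p' \<in> U" "0 < p' $ i" for i p'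
  proof -
    have "0 \<le> (1 / N) * P j $ i" for j
      using assms(1) P(1)[of j] \<open>N > 0\<close> by (simp add: subset_iff Delta_nonneg)
    then have "(1 / N) * P i $ i \<le> (\<Sum>j\<in>UNIV. (1 / N) * P j $ i)"
      by (intro member_le_sum) auto
    moreover have "0 < (1 / N) * P i $ i" using P(2)[OF that] \<open>N > 0\<close> by simp
    ultimately show ?thesis by (simp add: p_def)
  qed
  ultimately show thesis by (rule that)
qed

lemma lsc_bounded_below_on_compact:
  fixes f :: "'a::topological_space \<Rightarrow> ereal"
  assumes "compact K" and "\<forall>q\<in>K. f q \<noteq> -\<infinity>"
    and "\<forall>q\<in>K. f q \<le> Liminf (at q within K) f"
  shows "\<exists>B::real. \<forall>q\<in>K. ereal B \<le> f q"
proof -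
  have "\<exists>c::real. \<exists>T. open T \<and> q \<in> T \<and> (\<forall>r\<in>T \<inter> K. ereal c < f r)" if "q \<in> K" for q
  proof -
    have "-\<infinity> < f q" using assms(2) that by simp
    then obtain c :: real where c: "ereal c < f q"
      using ereal_dense2 by blast
    then have "ereal c < Liminf (at q within K) f"
      using assms(3) that by (meson less_le_trans)
    then have "eventually (\<lambda>r. ereal c < f r) (at q within K)"
      by (rule less_LiminfD)
    then obtain T where "open T" "q \<in> T" "\<forall>r\<in>T. r \<in> K \<longrightarrow> r \<noteq> q \<longrightarrow> ereal c < f r"
      by (auto simp: eventually_at_topological)
    then show ?thesis using c by blast
  qed
  then obtain c T where cT: "\<And>q. q \<in> K \<Longrightarrow> open (T q) \<and> q \<in> T q \<and> (\<forall>r\<in>T q \<inter> K. ereal (c q) < f r)"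
    by metis
  obtain F where F: "F \<subseteq> K" "finite F" "K \<subseteq> (\<Union>q\<in>F. T q)"
    using compactE_image[OF \<open>compact K\<close>, of K T] cT by blast
  have "ereal (Min (insert 0 (c ` F))) \<le> f r" if r: "r \<in> K" for r
  proof -
    obtain q where q: "q \<in> F" "r \<in> T q" using F(3) r by blast
    have "Min (insert 0 (c ` F)) \<le> c q" using F q by (intro Min_le) auto
    moreover have "ereal (c q) < f r" using cT[of q] q F r by auto
    ultimately show ?thesis by (meson ereal_less_eq(3) less_imp_le order_trans)
  qed
  then show ?thesis by blast
qed

lemma score_function_bounded_below:
  assumes "score_function L"
  obtains B :: real where "\<And>q y. q \<in> Delta \<Longrightarrow> ereal B \<le> L q y"
proof -
  have "\<exists>B::real. \<forall>q\<in>Delta. ereal B \<le> L q y" for y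
    using assms by (intro lsc_bounded_below_on_compact compact_Delta) (auto simp: score_function_def)
  then obtain Bf where Bf: "\<And>y q. q \<in> Delta \<Longrightarrow> ereal (Bf y) \<le> L q y" by metis
  have "ereal (Min (range Bf)) \<le> L q y" if "q \<in> Delta" for q y
  proof -
    have "Min (range Bf) \<le> Bf y" by simp
    then show ?thesis using Bf[OF that, of y] by (meson ereal_less_eq(3) order_trans)
  qed
  then show thesis by (rule that)
qed

definition loss_bounds ::
  "(real ^ 'y::finite \<Rightarrow> 'y \<Rightarrow> ereal) \<Rightarrow> ('x::finite \<times> 'y) set \<Rightarrow> (real ^ ('x \<times> 'y)) set" where
  "loss_bounds L S = {v. \<exists>h\<in>rules. \<forall>(x, y)\<in>S. L (h x) y \<le> ereal (v $ (x, y))}"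

lemma convex_loss_bounds:
  assumes "score_function L"
  shows "convex (loss_bounds L S)"
  unfolding convex_alt
proof (intro ballI allI impI)
  fix v1 v2 and t :: real
  assume "v1 \<in> loss_bounds L S" "v2 \<in> loss_bounds L S" and t: "0 \<le> t \<and> t \<le> 1"
  then obtain h1 h2 where h1: "h1 \<in> rules" "\<forall>(x, y)\<in>S. L (h1 x) y \<le> ereal (v1 $ (x, y))"
    and h2: "h2 \<in> rules" "\<forall>(x, y)\<in>S. L (h2 x) y \<le> ereal (v2 $ (x, y))"
    unfolding loss_bounds_def by blast
  define h where "h = (\<lambda>x. (1 - t) *\<^sub>R h1 x + t *\<^sub>R h2 x)"
  have "L (h x) y \<le> ereal (((1 - t) *\<^sub>R v1 + t *\<^sub>R v2) $ (x, y))" if "(x, y) \<in> S" for x y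
  proof -
    have "h1 x \<in> Delta" "h2 x \<in> Delta" using h1(1) h2(1) by (auto simp: rules_def)
    then have "L (h x) y \<le> ereal (1 - t) * L (h1 x) y + ereal t * L (h2 x) y"
      using assms t unfolding score_function_def h_def by blast
    also have "\<dots> \<le> ereal (1 - t) * ereal (v1 $ (x, y)) + ereal t * ereal (v2 $ (x, y))"
      using h1(2) h2(2) that t by (intro add_mono ereal_mult_left_mono) auto
    finally show ?thesis by simp
  qed
  moreover have "h \<in> rules" unfolding h_def using h1(1) h2(1) t by (intro rules_convex_comb) auto
  ultimately show "(1 - t) *\<^sub>R v1 + t *\<^sub>R v2 \<in> loss_bounds L S"
    unfolding loss_bounds_def by blast
qed

lemma exp_loss_le_inner:
  assumes "\<forall>(x, y)\<in>S. L (h x) y \<le> ereal (v $ (x, y))"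
    and "p \<in> Delta" and "\<And>xy. xy \<notin> S \<Longrightarrow> p $ xy = 0"
  shows "exp_loss L h p \<le> ereal (inner p v)"
proof -
  have "exp_loss L h p \<le> (\<Sum>(x, y)\<in>UNIV. ereal (p $ (x, y) * v $ (x, y)))"
    unfolding exp_loss_def
  proof (intro sum_mono, clarify)
    fix x y
    show "ereal (p $ (x, y)) * L (h x) y \<le> ereal (p $ (x, y) * v $ (x, y))"
    proof (cases "(x, y) \<in> S")
      case True
      then have "ereal (p $ (x, y)) * L (h x) y \<le> ereal (p $ (x, y)) * ereal (v $ (x, y))"
        using assms(1,2) by (intro ereal_mult_left_mono) (auto simp: Delta_nonneg)
      then show ?thesis by simp
    qed (simp add: assms(3) zero_ereal_def[symmetric])
  qed
  also have "\<dots> = ereal (inner p v)"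
    by (simp add: inner_vec_def case_prod_beta')
  finally show ?thesis .
qed

lemma exp_loss_eq_inner:
  assumes h: "h \<in> rules" and p: "p \<in> Delta" and fin: "exp_loss L h p < \<infinity>"
    and B: "\<And>q y. q \<in> Delta \<Longrightarrow> ereal B \<le> L q y"
  obtains v where "\<And>x y. 0 < p $ (x, y) \<Longrightarrow> L (h x) y = ereal (v $ (x, y))"
    and "\<And>xy. B \<le> v $ xy" and "exp_loss L h p = ereal (inner p v)"
proof -
  have hB: "ereal B \<le> L (h x) y" for x y using B h by (simp add: rules_def)
  have finite: "\<bar>L (h x) y\<bar> \<noteq> \<infinity>" if "0 < p $ (x, y)" for x y
  proof -
    have "ereal (p $ (x, y)) * L (h x) y \<noteq> \<infinity>"
      using fin sum_Pinfty[of "\<lambda>(x, y). ereal (p $ (x, y)) * L (h x) y" UNIV]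
      by (auto simp: exp_loss_def)
    then show ?thesis using that hB[of x y] by auto
  qed
  define v where "v = (\<chi> xy. if 0 < p $ xy then real_of_ereal (L (h (fst xy)) (snd xy)) else B)"
  have v: "L (h x) y = ereal (v $ (x, y))" if "0 < p $ (x, y)" for x y
    using finite[OF that] that by (simp add: v_def ereal_real')
  have "B \<le> v $ (x, y)" for x y
  proof (cases "0 < p $ (x, y)")
    case True
    then show ?thesis using hB[of x y] v[OF True] by simp
  qed (simp add: v_def)
  moreover have "exp_loss L h p = ereal (inner p v)"
  proof -
    have "ereal (p $ (x, y)) * L (h x) y = ereal (p $ (x, y) * v $ (x, y))" for x y
      using v[of x y] Delta_nonneg[OF p, of "(x, y)"]
      by (cases "0 < p $ (x, y)") (auto simp: zero_ereal_def[symmetric])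
    then show ?thesis by (simp add: exp_loss_def inner_vec_def case_prod_beta')
  qed
  ultimately show thesis using v that by (metis surj_pair)
qed

definition worst_case_sublevel :: "(real ^ 'n::finite) set \<Rightarrow> real \<Rightarrow> (real ^ 'n) set" where
  "worst_case_sublevel U c = {v. \<forall>p\<in>U. inner p v \<le> c}"

lemma convex_worst_case_sublevel: "convex (worst_case_sublevel U c)"
proof -
  have "worst_case_sublevel U c = (\<Inter>p\<in>U. {v. inner p v \<le> c})"
    by (auto simp: worst_case_sublevel_def)
  then show ?thesis by (simp add: convex_INT convex_halfspace_le)
qed

lemma const_mem_worst_case_sublevel: "U \<subseteq> Delta \<Longrightarrow> c *\<^sub>R 1 \<in> worst_case_sublevel U c"
  by (auto simp: worst_case_sublevel_def inner_Delta_one)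

lemma worst_case_sublevel_bound_imp_nonneg:
  fixes a :: "real ^ 'n::finite"
  assumes "U \<subseteq> Delta" and ab: "\<forall>v\<in>worst_case_sublevel U c. inner a v \<le> b"
  shows "0 \<le> a $ k"
proof (rule ccontr)
  assume "\<not> 0 \<le> a $ k"
  define t where "t = (\<bar>b\<bar> + \<bar>c * inner a 1\<bar> + 1) / (- a $ k)"
  have "0 \<le> t" and t: "- t * a $ k = \<bar>b\<bar> + \<bar>c * inner a 1\<bar> + 1"
    using \<open>\<not> 0 \<le> a $ k\<close> by (auto simp: t_def field_simps)
  define v where "v = c *\<^sub>R 1 - t *\<^sub>R axis k (1::real)"
  have "inner p v \<le> c" if "p \<in> U" for p
  proof -
    have "p \<in> Delta" using that assms(1) by blast
    then show ?thesis
      using \<open>0 \<le> t\<close> by (simp add: v_def inner_diff_right inner_axis inner_Delta_one Delta_nonneg)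
  qed
  then have "inner a v \<le> b" using ab by (simp add: worst_case_sublevel_def)
  moreover have "inner a v = c * inner a 1 - t * a $ k"
    by (simp add: v_def inner_diff_right inner_axis)
  ultimately show False using t by linarith
qed

lemma worst_case_sublevel_bound_imp_normal_mem:
  fixes a :: "real ^ 'n::finite"
  assumes "U \<subseteq> Delta" and "convex U" and "closed U"
    and ab: "\<forall>v\<in>worst_case_sublevel U c. inner a v \<le> b" and s: "0 < inner a 1"
  shows "(1 / inner a 1) *\<^sub>R a \<in> U"
proof (rule ccontr)
  define s where "s = inner a 1"
  define q where "q = (1 / s) *\<^sub>R a"
  assume "q \<notin> U"
  then obtain w \<beta> where w: "inner w q < \<beta>" "\<forall>p\<in>U. \<beta> < inner w p"
    using separating_hyperplane_closed_point[OF \<open>convex U\<close> \<open>closed U\<close>] by blast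
  define \<delta> where "\<delta> = s * (\<beta> - inner w q)"
  have "0 < \<delta>" using w(1) s by (simp add: \<delta>_def s_def)
  define t where "t = (\<bar>b\<bar> + \<bar>c * s\<bar> + 1) / \<delta>"
  have "0 \<le> t" and t: "t * \<delta> = \<bar>b\<bar> + \<bar>c * s\<bar> + 1"
    using \<open>0 < \<delta>\<close> by (auto simp: t_def)
  define v where "v = c *\<^sub>R 1 + t *\<^sub>R (\<beta> *\<^sub>R 1 - w)"
  have "inner p v \<le> c" if "p \<in> U" for p
  proof -
    have "inner p v = c + t * (\<beta> - inner w p)"
      using that assms(1) by (auto simp: v_def inner_add_right inner_diff_right inner_Delta_one
          inner_commute[of p w] algebra_simps)
    also have "\<dots> \<le> c"
      using w(2) that \<open>0 \<le> t\<close> by (simp add: mult_nonneg_nonpos less_imp_le)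
    finally show ?thesis .
  qed
  then have "inner a v \<le> b" using ab by (simp add: worst_case_sublevel_def)
  moreover have "inner a v = c * s + t * \<delta>"
  proof -
    have "inner a w = s * inner w q"
      using s by (simp add: q_def s_def inner_commute[of a w])
    then show ?thesis
      by (simp add: v_def \<delta>_def s_def inner_add_right inner_diff_right algebra_simps)
  qed
  ultimately show False using t by linarith
qed

lemma loss_bound_below_entropy:
  assumes B: "\<And>q y. q \<in> Delta \<Longrightarrow> ereal B \<le> L q y"
    and "p \<in> Delta" and "entropy L p < ereal e" and p_pos: "\<And>xy. xy \<in> S \<Longrightarrow> 0 < p $ xy"
  shows "\<exists>v\<in>loss_bounds L S. inner p v < e \<and> (\<forall>xy. B \<le> v $ xy)"
proof -
  obtain h where h: "h \<in> rules" "exp_loss L h p < ereal e"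
    using \<open>entropy L p < ereal e\<close> by (auto simp: entropy_def INF_less_iff)
  have fin: "exp_loss L h p < \<infinity>" using h(2) by (cases "exp_loss L h p") auto
  obtain v where v: "\<And>x y. 0 < p $ (x, y) \<Longrightarrow> L (h x) y = ereal (v $ (x, y))"
    "\<And>xy. B \<le> v $ xy" "exp_loss L h p = ereal (inner p v)"
    using exp_loss_eq_inner[OF h(1) \<open>p \<in> Delta\<close> fin B] by blast
  have "\<forall>(x, y)\<in>S. L (h x) y \<le> ereal (v $ (x, y))" using v(1) p_pos by auto
  then have "v \<in> loss_bounds L S" using h(1) by (auto simp: loss_bounds_def)
  then show ?thesis using h(2) v(2,3) by auto
qed

lemma rule_worst_case_le_if_loss_bound_in_sublevel:
  assumes "U \<subseteq> Delta" and off_S: "\<And>p xy. p \<in> U \<Longrightarrow> xy \<notin> S \<Longrightarrow> p $ xy = 0"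
    and "v \<in> loss_bounds L S" and "v \<in> worst_case_sublevel U c"
  shows "\<exists>h\<in>rules. \<forall>p\<in>U. exp_loss L h p \<le> ereal c"
proof -
  obtain h where "h \<in> rules" and hv: "\<forall>(x, y)\<in>S. L (h x) y \<le> ereal (v $ (x, y))"
    using \<open>v \<in> loss_bounds L S\<close> by (auto simp: loss_bounds_def)
  have "exp_loss L h p \<le> ereal c" if "p \<in> U" for p
  proof -
    have "exp_loss L h p \<le> ereal (inner p v)"
      using exp_loss_le_inner[OF hv] that assms(1) off_S by blast
    also have "\<dots> \<le> ereal c"
      using \<open>v \<in> worst_case_sublevel U c\<close> that by (simp add: worst_case_sublevel_def)
    finally show ?thesis .
  qed
  then show ?thesis using \<open>h \<in> rules\<close> by blast
qed

lemma exists_supporting_distribution: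
  fixes U C :: "(real ^ 'n::finite) set"
  assumes "U \<subseteq> Delta" and "convex U" and "closed U"
    and "convex C" and "C \<noteq> {}" and "C \<inter> worst_case_sublevel U c = {}"
  obtains q where "q \<in> U" and "\<And>v. v \<in> C \<Longrightarrow> c \<le> inner q v"
proof -
  obtain a b where "a \<noteq> 0" and ab: "\<forall>v\<in>worst_case_sublevel U c. inner a v \<le> b"
    and ba: "\<forall>v\<in>C. b \<le> inner a v"
    using separating_hyperplane_sets[OF convex_worst_case_sublevel \<open>convex C\<close> _ \<open>C \<noteq> {}\<close>]
      const_mem_worst_case_sublevel[OF \<open>U \<subseteq> Delta\<close>] assms(6) by blast
  have a_nonneg: "0 \<le> a $ k" for k
    using worst_case_sublevel_bound_imp_nonneg[OF \<open>U \<subseteq> Delta\<close> ab] .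
  define s where "s = inner a 1"
  have "0 < s"
  proof -
    obtain k where "a $ k \<noteq> 0" using \<open>a \<noteq> 0\<close> by (metis vec_eq_iff zero_index)
    then have "0 < a $ k" using a_nonneg[of k] by simp
    also have "a $ k \<le> (\<Sum>i\<in>UNIV. a $ i)" using a_nonneg by (intro member_le_sum) auto
    finally show ?thesis by (simp add: s_def inner_vec_def)
  qed
  define q where "q = (1 / s) *\<^sub>R a"
  have "q \<in> U"
    unfolding q_def s_def
    using worst_case_sublevel_bound_imp_normal_mem[OF assms(1-3) ab] \<open>0 < s\<close> by (simp add: s_def)
  moreover have "c \<le> inner q v" if "v \<in> C" for v
  proof -
    have "c * s \<le> b"
      using ab const_mem_worst_case_sublevel[OF \<open>U \<subseteq> Delta\<close>] by (force simp: s_def)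
    also have "b \<le> s * inner q v" using ba that \<open>0 < s\<close> by (simp add: q_def)
    finally show ?thesis using \<open>0 < s\<close> by (simp add: mult.commute)
  qed
  ultimately show thesis by (rule that)
qed

lemma exists_mixture_above:
  fixes e c m :: real
  assumes "e < c"
  obtains t where "0 < t" and "t \<le> 1" and "e < (1 - t) * c + t * m"
proof -
  define t where "t = (c - e) / (\<bar>c - m\<bar> + (c - e))"
  have "0 < t" "t \<le> 1" using assms by (auto simp: t_def)
  moreover have "t * (c - m) < c - e"
  proof -
    have "t * (c - m) \<le> t * \<bar>c - m\<bar>" using \<open>0 < t\<close> by (intro mult_left_mono) auto
    also have "\<dots> = (c - e) * (\<bar>c - m\<bar> / (\<bar>c - m\<bar> + (c - e)))" by (simp add: t_def)
    also have "\<dots> < (c - e) * 1" using assms by (intro mult_strict_left_mono) auto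
    finally show ?thesis by simp
  qed
  ultimately show thesis using that by (simp add: algebra_simps)
qed

lemma exists_rule_worst_case_le:
  fixes L :: "real ^ 'y::finite \<Rightarrow> 'y \<Rightarrow> ereal"
    and U :: "(real ^ ('x::finite \<times> 'y)) set"
  assumes L: "score_function L"
    and U: "U \<subseteq> Delta" "convex U" "closed U" "U \<noteq> {}"
    and ent: "\<forall>p\<in>U. entropy L p < ereal e" and "e < c"
  shows "\<exists>h\<in>rules. \<forall>p\<in>U. exp_loss L h p \<le> ereal c"
proof (rule ccontr)
  assume no_rule: "\<not> ?thesis"
  define S where "S = {xy. \<exists>p\<in>U. 0 < p $ xy}"
  have off_S: "p $ xy = 0" if "p \<in> U" "xy \<notin> S" for p xy
  proof -
    have "0 \<le> p $ xy" using that(1) U(1) Delta_nonneg by blast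
    moreover have "\<not> 0 < p $ xy" using that unfolding S_def by blast
    ultimately show ?thesis by simp
  qed
  obtain B where B: "\<And>q y. q \<in> Delta \<Longrightarrow> ereal B \<le> L q y"
    using score_function_bounded_below[OF L] by blast
  obtain p0 where "p0 \<in> U" and "\<And>i p'. p' \<in> U \<Longrightarrow> 0 < p' $ i \<Longrightarrow> 0 < p0 $ i"
    using exists_mem_pos_on_support[OF U(1,2,4)] by metis
  then have p0_pos: "\<And>xy. xy \<in> S \<Longrightarrow> 0 < p0 $ xy" unfolding S_def by blast
  have good: "\<exists>v\<in>loss_bounds L S. inner p v < e \<and> (\<forall>xy. B \<le> v $ xy)"
    if "p \<in> U" and "\<And>xy. xy \<in> S \<Longrightarrow> 0 < p $ xy" for p
  proof -
    have "p \<in> Delta" and "entropy L p < ereal e" using that(1) U(1) ent by auto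
    then show ?thesis using loss_bound_below_entropy[where L = L, OF B] that(2) by blast
  qed
  have "loss_bounds L S \<inter> worst_case_sublevel U c = {}"
    using rule_worst_case_le_if_loss_bound_in_sublevel[OF U(1) off_S] no_rule by blast
  then obtain q where "q \<in> U" and q: "\<And>v. v \<in> loss_bounds L S \<Longrightarrow> c \<le> inner q v"
    using exists_supporting_distribution[OF U(1-3) convex_loss_bounds[OF L]] good[OF \<open>p0 \<in> U\<close> p0_pos]
    by blast
  obtain t where t: "0 < t" "t \<le> 1" "e < (1 - t) * c + t * B"
    using exists_mixture_above[OF \<open>e < c\<close>] .
  define qt where "qt = (1 - t) *\<^sub>R q + t *\<^sub>R p0"
  have "qt \<in> U" unfolding qt_def using U(2) \<open>q \<in> U\<close> \<open>p0 \<in> U\<close> t by (simp add: convex_alt)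
  moreover have "0 < qt $ xy" if "xy \<in> S" for xy
    using p0_pos[OF that] Delta_nonneg[of q xy] \<open>q \<in> U\<close> U(1) t
    by (auto simp: qt_def intro!: add_nonneg_pos)
  ultimately obtain v where v: "v \<in> loss_bounds L S" "inner qt v < e" "\<forall>xy. B \<le> v $ xy"
    using good by blast
  have "(1 - t) * c + t * B \<le> (1 - t) * inner q v + t * inner p0 v"
    using q[OF v(1)] inner_Delta_ge[of p0 B v] \<open>p0 \<in> U\<close> U(1) v(3) t
    by (intro add_mono mult_left_mono) auto
  also have "\<dots> = inner qt v" by (simp add: qt_def inner_add_left)
  finally show False using v(2) t(3) by linarith
qed

lemma MRC_worst_case_le_entropy_set:
  assumes "score_function L" and "U \<subseteq> Delta" and "convex U" and "closed U" and "U \<noteq> {}"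
    and "is_MRC L U h"
  shows "(SUP p\<in>U. exp_loss L h p) \<le> entropy_set L U"
proof (rule dense_ge)
  fix z assume "entropy_set L U < z"
  then obtain e where e: "entropy_set L U < ereal e" and "ereal e < z"
    using ereal_dense2 by blast
  then obtain c where "e < c" and c: "ereal c < z"
    using ereal_dense2 by fastforce
  have "entropy L p < ereal e" if "p \<in> U" for p
  proof -
    have "entropy L p \<le> entropy_set L U"
      unfolding entropy_set_def using that by (rule SUP_upper)
    then show ?thesis using e by (rule le_less_trans)
  qed
  then obtain h' where "h' \<in> rules" and h': "\<forall>p\<in>U. exp_loss L h' p \<le> ereal c"
    using exists_rule_worst_case_le[OF assms(1-5) _ \<open>e < c\<close>] by auto
  have "(SUP p\<in>U. exp_loss L h p) \<le> (SUP p\<in>U. exp_loss L h' p)"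
    using \<open>is_MRC L U h\<close> \<open>h' \<in> rules\<close> by (simp add: is_MRC_def)
  also have "\<dots> \<le> ereal c" using h' by (intro SUP_least) auto
  finally show "(SUP p\<in>U. exp_loss L h p) \<le> z" using c by simp
qed

theorem theorem1:
  fixes L :: "real ^ 'y::finite \<Rightarrow> 'y \<Rightarrow> ereal"
    and U :: "(real ^ ('x::finite \<times> 'y)) set"
    and hU :: "'x \<Rightarrow> real ^ 'y"
    and pU :: "real ^ ('x \<times> 'y)"
  assumes "score_function L"
    and "U \<subseteq> Delta" and "convex U" and "compact U"
    and "is_MRC L U hU"
    and "pU \<in> U" and "\<forall>p\<in>U. entropy L p \<le> entropy L pU"
  shows "entropy_set L U = exp_loss L hU pU
    \<and> exp_loss L hU pU = (INF h\<in>rules. SUP p\<in>U. exp_loss L h p)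
    \<and> (\<forall>h\<in>rules. exp_loss L hU pU \<le> exp_loss L h pU)
    \<and> (\<forall>p\<in>U. exp_loss L hU p \<le> exp_loss L hU pU)"
proof -
  have "hU \<in> rules" and MRC: "\<forall>h\<in>rules. (SUP p\<in>U. exp_loss L hU p) \<le> (SUP p\<in>U. exp_loss L h p)"
    using \<open>is_MRC L U hU\<close> by (auto simp: is_MRC_def)
  have entropy_pU: "entropy_set L U = entropy L pU"
    using assms(6,7) unfolding entropy_set_def by (intro antisym SUP_least SUP_upper) auto
  have pU_best: "\<forall>h\<in>rules. entropy L pU \<le> exp_loss L h pU"
    unfolding entropy_def by (blast intro: INF_lower)
  have worst_case: "\<forall>p\<in>U. exp_loss L hU p \<le> (SUP p\<in>U. exp_loss L hU p)"
    by (simp add: SUP_upper)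
  have "entropy_set L U \<le> exp_loss L hU pU"
    using entropy_pU pU_best \<open>hU \<in> rules\<close> by simp
  moreover have "exp_loss L hU pU \<le> (SUP p\<in>U. exp_loss L hU p)"
    using worst_case \<open>pU \<in> U\<close> by blast
  moreover have "(SUP p\<in>U. exp_loss L hU p) \<le> entropy_set L U"
    using assms(1-5) \<open>pU \<in> U\<close> by (intro MRC_worst_case_le_entropy_set compact_imp_closed) auto
  ultimately have saddle: "entropy_set L U = exp_loss L hU pU"
    and minimax_value: "exp_loss L hU pU = (SUP p\<in>U. exp_loss L hU p)"
    by (auto intro: antisym order_trans)
  have "(INF h\<in>rules. SUP p\<in>U. exp_loss L h p) = (SUP p\<in>U. exp_loss L hU p)"
    using \<open>hU \<in> rules\<close> MRC by (intro antisym INF_lower INF_greatest) auto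
  then show ?thesis
    using saddle minimax_value entropy_pU pU_best worst_case by simp
qed

end
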